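(* Let $\Lambda=kS_{(r,s)}/I$ be a quadratic monomial algebra on an $(r,s)$-star quiver with $\operatorname{Ext}^1_{\Lambda^e}(\Lambda,\Lambda^e)=0$. If $s\geq2$ and $a$ is an arrow with $h(a)=z$, then $|\mathcal Z_a|\leq s-1$. If $r\geq 2$ and $b$ is an arrow with $t(b)=z$, then $|\mathcal Z_b|\leq r-1$.
   Context: The $(r,s)$-star quiver $S_{(r,s)}$: central vertex $z$, $r$ arrows $a_i:i\to z$ from distinct vertices and $s$ arrows $b_j:z\to j$ to distinct vertices, nothing else. Quadratic monomial: $I$ admissible generated by paths of length $2$. For $a$ with $h(a)=z$, $\mathcal Z_a=\{b:z\to j\mid ba=0\}$; for $b$ with $t(b)=z$, $\mathcal Z_b=\{a:i\to z\mid ba=0\}$. $\Lambda^e=\Lambda\otimes_k\Lambda^{\mathrm{op}}$. *)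

theory Defs
  imports Main
begin

text \<open>The (r,s)-star quiver: central vertex VZ, sources VI i (i<r), sinks VO j (j<s),
  arrows A i : VI i -> VZ and B j : VZ -> VO j.  Paths of the quiver (there are none of
  length >= 3): trivial paths E v, arrows, and BA i j = b_j a_i (first a_i, then b_j).\<close>

datatype vert = VZ | VI nat | VO nat
datatype path = E vert | A nat | B nat | BA nat nat

fun src :: "path \<Rightarrow> vert" where
  "src (E v) = v" | "src (A i) = VI i" | "src (B j) = VZ" | "src (BA i j) = VI i"

fun tgt :: "path \<Rightarrow> vert" where
  "tgt (E v) = v" | "tgt (A i) = VZ" | "tgt (B j) = VO j" | "tgt (BA i j) = VO j"

text \<open>The quadratic monomial ideal I is given by a set Z of pairs (i,j): the generator
  b_j a_i lies in I iff (i,j) \<in> Z.  Basis of Lambda = k S_(r,s) / I: the paths not in I.\<close>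

definition paths :: "nat \<Rightarrow> nat \<Rightarrow> (nat \<times> nat) set \<Rightarrow> path set" where
  "paths r s Z = {E VZ} \<union> E ` VI ` {..<r} \<union> E ` VO ` {..<s} \<union> A ` {..<r} \<union> B ` {..<s}
     \<union> {BA i j | i j. i < r \<and> j < s \<and> (i, j) \<notin> Z}"

text \<open>Product of basis paths in Lambda: pmul Z p q = p q (q first, then p), None meaning 0.\<close>
definition pmul :: "(nat \<times> nat) set \<Rightarrow> path \<Rightarrow> path \<Rightarrow> path option" where
  "pmul Z p q = (if tgt q \<noteq> src p then None else
     (case p of E _ \<Rightarrow> Some q
      | _ \<Rightarrow> (case q of E _ \<Rightarrow> Some p
              | A i \<Rightarrow> (case p of B j \<Rightarrow> (if (i, j) \<in> Z then None else Some (BA i j)) | _ \<Rightarrow> None)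
              | _ \<Rightarrow> None)))"

definition lam :: "nat \<Rightarrow> nat \<Rightarrow> (nat \<times> nat) set \<Rightarrow> (path \<Rightarrow> 'k::field) set" where
  "lam r s Z = {x. \<forall>p. p \<notin> paths r s Z \<longrightarrow> x p = 0}"

definition lmul :: "nat \<Rightarrow> nat \<Rightarrow> (nat \<times> nat) set \<Rightarrow> (path \<Rightarrow> 'k::field) \<Rightarrow> (path \<Rightarrow> 'k) \<Rightarrow> (path \<Rightarrow> 'k)" where
  "lmul r s Z x y = (\<lambda>p. \<Sum>(p1, p2) \<in> {(p1, p2). p1 \<in> paths r s Z \<and> p2 \<in> paths r s Z \<and> pmul Z p1 p2 = Some p}.
      x p1 * y p2)"

text \<open>Elements of the enveloping algebra Lambda^e = Lambda \<otimes>_k Lambda^op, with basis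
  pairs (p,q) standing for p \<otimes> q.\<close>
definition lamE :: "nat \<Rightarrow> nat \<Rightarrow> (nat \<times> nat) set \<Rightarrow> (path \<times> path \<Rightarrow> 'k::field) set" where
  "lamE r s Z = {f. \<forall>p q. (p \<notin> paths r s Z \<or> q \<notin> paths r s Z) \<longrightarrow> f (p, q) = 0}"

text \<open>Lambda-bimodule structure of Lambda^e corresponding to its left regular Lambda^e-module
  structure: x (u \<otimes> v) y = (x u) \<otimes> (v y).\<close>
definition lact :: "nat \<Rightarrow> nat \<Rightarrow> (nat \<times> nat) set \<Rightarrow> (path \<Rightarrow> 'k::field) \<Rightarrow> (path \<times> path \<Rightarrow> 'k) \<Rightarrow> (path \<times> path \<Rightarrow> 'k)" where
  "lact r s Z x f = (\<lambda>(p, q). \<Sum>(p1, p2) \<in> {(p1, p2). p1 \<in> paths r s Z \<and> p2 \<in> paths r s Z \<and> pmul Z p1 p2 = Some p}.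
      x p1 * f (p2, q))"

definition ract :: "nat \<Rightarrow> nat \<Rightarrow> (nat \<times> nat) set \<Rightarrow> (path \<times> path \<Rightarrow> 'k::field) \<Rightarrow> (path \<Rightarrow> 'k) \<Rightarrow> (path \<times> path \<Rightarrow> 'k)" where
  "ract r s Z f y = (\<lambda>(p, q). \<Sum>(q1, q2) \<in> {(q1, q2). q1 \<in> paths r s Z \<and> q2 \<in> paths r s Z \<and> pmul Z q1 q2 = Some q}.
      f (p, q1) * y q2)"

definition is_derivation :: "nat \<Rightarrow> nat \<Rightarrow> (nat \<times> nat) set \<Rightarrow> ((path \<Rightarrow> 'k::field) \<Rightarrow> (path \<times> path \<Rightarrow> 'k)) \<Rightarrow> bool" where
  "is_derivation r s Z d \<longleftrightarrow>
     (\<forall>x \<in> lam r s Z. d x \<in> lamE r s Z) \<and>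
     (\<forall>x \<in> lam r s Z. \<forall>y \<in> lam r s Z. d (\<lambda>p. x p + y p) = (\<lambda>pq. d x pq + d y pq)) \<and>
     (\<forall>c. \<forall>x \<in> lam r s Z. d (\<lambda>p. c * x p) = (\<lambda>pq. c * d x pq)) \<and>
     (\<forall>x \<in> lam r s Z. \<forall>y \<in> lam r s Z.
        d (lmul r s Z x y) = (\<lambda>pq. lact r s Z x (d y) pq + ract r s Z (d x) y pq))"

definition is_inner_derivation :: "nat \<Rightarrow> nat \<Rightarrow> (nat \<times> nat) set \<Rightarrow> ((path \<Rightarrow> 'k::field) \<Rightarrow> (path \<times> path \<Rightarrow> 'k)) \<Rightarrow> bool" where
  "is_inner_derivation r s Z d \<longleftrightarrow>
     (\<exists>m \<in> lamE r s Z. \<forall>x \<in> lam r s Z. d x = (\<lambda>pq. lact r s Z x m pq - ract r s Z m x pq))"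

text \<open>Ext^1_{Lambda^e}(Lambda, Lambda^e) = HH^1(Lambda, Lambda^e) = Der / Inn vanishes, over the field 'k.\<close>
definition Ext1_vanishes :: "'k::field itself \<Rightarrow> nat \<Rightarrow> nat \<Rightarrow> (nat \<times> nat) set \<Rightarrow> bool" where
  "Ext1_vanishes _ r s Z \<longleftrightarrow>
     (\<forall>d :: (path \<Rightarrow> 'k) \<Rightarrow> (path \<times> path \<Rightarrow> 'k).
        is_derivation r s Z d \<longrightarrow> is_inner_derivation r s Z d)"

end

(* If every b_j kills a_i0 and there is a second source arrow a_i, then the k-linear map
   sending a_i to a_i0 \<otimes> e_i and every other arrow to 0 is a derivation
   Lambda -> Lambda^e (nothing can be composed onto a_i0 on the left or onto e_i on the
   right), and it is not inner since a_i occurs in neither tensor factor.  Dually for a b_j0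
   killed by every a_i.  If r = 1, a fully annihilated a_0 makes b_0 fully annihilated,
   so s \<ge> 2 still leads to the dual contradiction. *)
theory Submission
  imports Defs
begin

definition arrows :: "nat \<Rightarrow> nat \<Rightarrow> path set" where
  "arrows r s = A ` {..<r} \<union> B ` {..<s}"

definition arrow_derivation :: "path \<Rightarrow> path \<Rightarrow> path \<Rightarrow> (path \<Rightarrow> 'k::zero) \<Rightarrow> (path \<times> path \<Rightarrow> 'k)" where
  "arrow_derivation c p0 q0 x = (\<lambda>pq. if pq = (p0, q0) then x c else 0)"

lemma finite_paths: "finite (paths r s Z)"
proof -
  have "{BA i j | i j. i < r \<and> j < s \<and> (i, j) \<notin> Z} \<subseteq> (\<lambda>(i, j). BA i j) ` ({..<r} \<times> {..<s})"
    by auto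
  then have "finite {BA i j | i j. i < r \<and> j < s \<and> (i, j) \<notin> Z}"
    by (rule finite_subset) simp
  then show ?thesis
    by (simp add: paths_def)
qed

lemma finite_factorisations:
  "finite {(p1, p2). p1 \<in> paths r s Z \<and> p2 \<in> paths r s Z \<and> pmul Z p1 p2 = Some p}"
  by (rule finite_subset[of _ "paths r s Z \<times> paths r s Z"]) (auto simp: finite_paths)

lemma arrows_subset_paths: "arrows r s \<subseteq> paths r s Z"
  by (auto simp: arrows_def paths_def)

lemma E_tgt_in_paths: "p \<in> paths r s Z \<Longrightarrow> E (tgt p) \<in> paths r s Z"
  and E_src_in_paths: "p \<in> paths r s Z \<Longrightarrow> E (src p) \<in> paths r s Z"
  by (auto simp: paths_def)

lemma pmul_E_left: "pmul Z (E v) q = (if tgt q = v then Some q else None)"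
  by (simp add: pmul_def)

lemma pmul_eq_E: "pmul Z p1 p2 = Some (E v) \<longleftrightarrow> p1 = E v \<and> p2 = E v"
  by (cases p1; cases p2) (auto simp: pmul_def split: path.splits if_splits)

lemma pmul_eq_arrow:
  assumes "c \<in> arrows r s"
  shows "pmul Z p1 p2 = Some c \<longleftrightarrow> (p1 = E (tgt c) \<and> p2 = c) \<or> (p1 = c \<and> p2 = E (src c))"
  using assms
  by (cases p1; cases p2) (auto simp: arrows_def pmul_def split: path.splits if_splits)

lemma lmul_at_arrow:
  assumes "c \<in> arrows r s"
  shows "lmul r s Z x y c = x (E (tgt c)) * y c + x c * y (E (src c))"
proof -
  have c: "c \<in> paths r s Z"
    using assms arrows_subset_paths by blast
  have "{(p1, p2). p1 \<in> paths r s Z \<and> p2 \<in> paths r s Z \<and> pmul Z p1 p2 = Some c}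
      = {(E (tgt c), c), (c, E (src c))}"
    using c by (auto simp: pmul_eq_arrow[OF assms] E_tgt_in_paths E_src_in_paths)
  moreover have "c \<noteq> E (tgt c)"
    using assms by (auto simp: arrows_def)
  ultimately show ?thesis
    by (simp add: lmul_def)
qed

lemma lact_point:
  assumes "p0 \<in> paths r s Z"
    and left_maximal: "\<forall>p1 \<in> paths r s Z. pmul Z p1 p0 \<noteq> None \<longrightarrow> p1 = E (tgt p0)"
  shows "lact r s Z x (\<lambda>pq. if pq = (p0, q0) then t else 0) (p, q)
       = (if (p, q) = (p0, q0) then x (E (tgt p0)) * t else 0)"
proof -
  let ?F = "{(p1, p2). p1 \<in> paths r s Z \<and> p2 \<in> paths r s Z \<and> pmul Z p1 p2 = Some p}"
  have "lact r s Z x (\<lambda>pq. if pq = (p0, q0) then t else 0) (p, q)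
      = (\<Sum>z \<in> ?F. if q = q0 \<and> z = (E (tgt p0), p0) then x (E (tgt p0)) * t else 0)"
    unfolding lact_def case_prod_conv using left_maximal by (intro sum.cong) (auto split: if_splits)
  also have "\<dots> = (if q = q0 \<and> (E (tgt p0), p0) \<in> ?F then x (E (tgt p0)) * t else 0)"
    using finite_factorisations by (cases "q = q0") (simp_all add: sum.delta)
  also have "\<dots> = (if (p, q) = (p0, q0) then x (E (tgt p0)) * t else 0)"
    using assms by (auto simp: pmul_E_left E_tgt_in_paths)
  finally show ?thesis .
qed

lemma ract_point:
  assumes "q0 \<in> paths r s Z"
    and right_maximal: "\<forall>q2 \<in> paths r s Z. pmul Z q0 q2 \<noteq> None \<longrightarrow> q2 = E (src q0)"
  shows "ract r s Z (\<lambda>pq. if pq = (p0, q0) then t else 0) y (p, q)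
       = (if (p, q) = (p0, q0) then t * y (E (src q0)) else 0)"
proof -
  let ?F = "{(q1, q2). q1 \<in> paths r s Z \<and> q2 \<in> paths r s Z \<and> pmul Z q1 q2 = Some q}"
  have "ract r s Z (\<lambda>pq. if pq = (p0, q0) then t else 0) y (p, q)
      = (\<Sum>z \<in> ?F. if p = p0 \<and> z = (q0, E (src q0)) then t * y (E (src q0)) else 0)"
    unfolding ract_def case_prod_conv using right_maximal by (intro sum.cong) (auto split: if_splits)
  also have "\<dots> = (if p = p0 \<and> (q0, E (src q0)) \<in> ?F then t * y (E (src q0)) else 0)"
    using finite_factorisations by (cases "p = p0") (simp_all add: sum.delta)
  also have "\<dots> = (if (p, q) = (p0, q0) then t * y (E (src q0)) else 0)"
    using assms by (auto simp: pmul_def E_src_in_paths split: path.splits)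
  finally show ?thesis .
qed

lemma is_derivation_arrow_derivation:
  assumes c: "c \<in> arrows r s"
    and p0: "p0 \<in> paths r s Z" "tgt p0 = tgt c"
    and q0: "q0 \<in> paths r s Z" "src q0 = src c"
    and left_maximal: "\<forall>p1 \<in> paths r s Z. pmul Z p1 p0 \<noteq> None \<longrightarrow> p1 = E (tgt p0)"
    and right_maximal: "\<forall>q2 \<in> paths r s Z. pmul Z q0 q2 \<noteq> None \<longrightarrow> q2 = E (src q0)"
  shows "is_derivation r s Z (arrow_derivation c p0 q0 :: (path \<Rightarrow> 'k::field) \<Rightarrow> _)"
  unfolding is_derivation_def
proof (intro conjI ballI allI)
  fix x :: "path \<Rightarrow> 'k"
  show "arrow_derivation c p0 q0 x \<in> lamE r s Z"
    using p0 q0 by (auto simp: lamE_def arrow_derivation_def)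
next
  fix x y :: "path \<Rightarrow> 'k"
  show "arrow_derivation c p0 q0 (lmul r s Z x y)
      = (\<lambda>pq. lact r s Z x (arrow_derivation c p0 q0 y) pq + ract r s Z (arrow_derivation c p0 q0 x) y pq)"
  proof (rule ext, clarify)
    fix p q
    show "arrow_derivation c p0 q0 (lmul r s Z x y) (p, q)
        = lact r s Z x (arrow_derivation c p0 q0 y) (p, q) + ract r s Z (arrow_derivation c p0 q0 x) y (p, q)"
      unfolding arrow_derivation_def lact_point[OF p0(1) left_maximal] ract_point[OF q0(1) right_maximal]
      by (simp add: lmul_at_arrow[OF c] p0(2) q0(2))
  qed
qed (auto simp: arrow_derivation_def)

lemma not_inner_arrow_derivation:
  assumes c: "c \<in> arrows r s"
    and "\<forall>p1 p2. pmul Z p1 p2 = Some p0 \<longrightarrow> p1 \<noteq> c"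
    and "\<forall>q1 q2. pmul Z q1 q2 = Some q0 \<longrightarrow> q2 \<noteq> c"
  shows "\<not> is_inner_derivation r s Z (arrow_derivation c p0 q0 :: (path \<Rightarrow> 'k::field) \<Rightarrow> _)"
proof
  assume "is_inner_derivation r s Z (arrow_derivation c p0 q0 :: (path \<Rightarrow> 'k) \<Rightarrow> _)"
  then obtain m :: "path \<times> path \<Rightarrow> 'k"
    where m: "\<forall>x \<in> lam r s Z. arrow_derivation c p0 q0 x = (\<lambda>pq. lact r s Z x m pq - ract r s Z m x pq)"
    unfolding is_inner_derivation_def by blast
  define x :: "path \<Rightarrow> 'k" where "x = (\<lambda>p. if p = c then 1 else 0)"
  have "x \<in> lam r s Z"
    using c arrows_subset_paths by (auto simp: x_def lam_def)
  then have "arrow_derivation c p0 q0 x (p0, q0) = lact r s Z x m (p0, q0) - ract r s Z m x (p0, q0)"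
    using m by metis
  moreover have "lact r s Z x m (p0, q0) = 0" "ract r s Z m x (p0, q0) = 0"
    using assms(2,3) by (auto simp: lact_def ract_def x_def intro!: sum.neutral)
  ultimately show False
    by (simp add: arrow_derivation_def x_def)
qed

lemma not_Ext1_vanishes_if_A_annihilated:
  assumes "i0 < r" "i < r" "i \<noteq> i0" "\<forall>j<s. (i0, j) \<in> Z"
  shows "\<not> Ext1_vanishes TYPE('k::field) r s Z"
proof -
  let ?d = "arrow_derivation (A i) (A i0) (E (VI i)) :: (path \<Rightarrow> 'k) \<Rightarrow> _"
  have "is_derivation r s Z ?d"
    using assms
    by (intro is_derivation_arrow_derivation)
       (auto simp: arrows_def paths_def pmul_def split: path.splits)
  moreover have "\<not> is_inner_derivation r s Z ?d"
    using assms
    by (intro not_inner_arrow_derivation)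
       (auto simp: arrows_def pmul_eq_E pmul_eq_arrow[of "A i0" r s])
  ultimately show ?thesis
    unfolding Ext1_vanishes_def by blast
qed

lemma not_Ext1_vanishes_if_B_annihilated:
  assumes "j0 < s" "j < s" "j \<noteq> j0" "\<forall>i<r. (i, j0) \<in> Z"
  shows "\<not> Ext1_vanishes TYPE('k::field) r s Z"
proof -
  let ?d = "arrow_derivation (B j) (E (VO j)) (B j0) :: (path \<Rightarrow> 'k) \<Rightarrow> _"
  have "is_derivation r s Z ?d"
    using assms
    by (intro is_derivation_arrow_derivation)
       (auto simp: arrows_def paths_def pmul_def split: path.splits)
  moreover have "\<not> is_inner_derivation r s Z ?d"
    using assms
    by (intro not_inner_arrow_derivation)
       (auto simp: arrows_def pmul_eq_E pmul_eq_arrow[of "B j0" r s])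
  ultimately show ?thesis
    unfolding Ext1_vanishes_def by blast
qed

lemma A_not_annihilated_by_all_B:
  assumes "Ext1_vanishes TYPE('k::field) r s Z" "s \<ge> 2" "i0 < r"
  shows "\<exists>j<s. (i0, j) \<notin> Z"
proof (rule ccontr)
  assume "\<not> ?thesis"
  then have annihilated: "\<forall>j<s. (i0, j) \<in> Z"
    by blast
  show False
  proof (cases "r \<ge> 2")
    case True
    then have "\<exists>i<r. i \<noteq> i0"
      by presburger
    then obtain i where "i < r" "i \<noteq> i0"
      by blast
    then show False
      using not_Ext1_vanishes_if_A_annihilated[OF \<open>i0 < r\<close> _ _ annihilated] assms(1) by blast
  next
    case False
    then have "r = 1" "i0 = 0"
      using assms(3) by auto
    then have "\<forall>i<r. (i, 0) \<in> Z"
      using annihilated assms(2) by auto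
    then show False
      using not_Ext1_vanishes_if_B_annihilated[of 0 s 1 r Z] assms(1,2) by auto
  qed
qed

lemma B_not_annihilated_by_all_A:
  assumes "Ext1_vanishes TYPE('k::field) r s Z" "r \<ge> 2" "j0 < s"
  shows "\<exists>i<r. (i, j0) \<notin> Z"
proof (rule ccontr)
  assume "\<not> ?thesis"
  then have annihilated: "\<forall>i<r. (i, j0) \<in> Z"
    by blast
  show False
  proof (cases "s \<ge> 2")
    case True
    then have "\<exists>j<s. j \<noteq> j0"
      by presburger
    then obtain j where "j < s" "j \<noteq> j0"
      by blast
    then show False
      using not_Ext1_vanishes_if_B_annihilated[OF \<open>j0 < s\<close> _ _ annihilated] assms(1) by blast
  next
    case False
    then have "s = 1" "j0 = 0"
      using assms(3) by auto
    then have "\<forall>j<s. (0, j) \<in> Z"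
      using annihilated assms(2) by auto
    then show False
      using not_Ext1_vanishes_if_A_annihilated[of 0 r 1 s Z] assms(1,2) by auto
  qed
qed

lemma card_le_pred_if_not_all:
  fixes n :: nat
  assumes "j0 < n" "\<not> P j0"
  shows "card {j. j < n \<and> P j} \<le> n - 1"
proof -
  have "card {j. j < n \<and> P j} \<le> card ({..<n} - {j0})"
    using assms by (intro card_mono) auto
  also have "\<dots> = n - 1"
    using assms by simp
  finally show ?thesis .
qed

theorem mainTheorem16:
  fixes r s :: nat and Z :: "(nat \<times> nat) set"
  assumes "Z \<subseteq> {..<r} \<times> {..<s}"
    and "Ext1_vanishes TYPE('k::field) r s Z"
  shows "(s \<ge> 2 \<longrightarrow> (\<forall>i < r. card {j. j < s \<and> (i, j) \<in> Z} \<le> s - 1)) \<and>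
         (r \<ge> 2 \<longrightarrow> (\<forall>j < s. card {i. i < r \<and> (i, j) \<in> Z} \<le> r - 1))"
proof (intro conjI impI allI)
  fix i assume "s \<ge> 2" "i < r"
  then obtain j where "j < s" "(i, j) \<notin> Z"
    using A_not_annihilated_by_all_B assms(2) by blast
  then show "card {j. j < s \<and> (i, j) \<in> Z} \<le> s - 1"
    by (rule card_le_pred_if_not_all)
next
  fix j assume "r \<ge> 2" "j < s"
  then obtain i where "i < r" "(i, j) \<notin> Z"
    using B_not_annihilated_by_all_A assms(2) by blast
  then show "card {i. i < r \<and> (i, j) \<in> Z} \<le> r - 1"
    by (rule card_le_pred_if_not_all)
qed

end
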